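(* For every $\alpha\in(1/2,1/\sqrt2)$, the set $S_\alpha$ satisfies $\dim_H S_\alpha=-\log2/\log\alpha$. In particular, for $h\in(1,2)$ and $\alpha=2^{-1/h}$, $\dim_H S_\alpha=h$.
   Context: Let $\mathcal{R}$ be counterclockwise rotation by $\pi/2$, $\mathcal{R}(x_1,x_2)=(-x_2,x_1)$. For $\alpha\in(1/2,1/\sqrt2)$ let $F_1(x)=(1,0)+\alpha\mathcal{R}x$, $F_2(x)=(-1,0)+\alpha\mathcal{R}x$, and for a finite word $w=(w_1,\dots,w_k)\in\{1,2\}^k$ let $F_w=F_{w_1}\circ\cdots\circ F_{w_k}$ ($F_\emptyset=\mathrm{Id}$). Let $I=[-1,1]\times\{0\}$. $S_\alpha$ is the compact set $S_\alpha=\overline{\bigcup_{k\ge0}\bigcup_{w\in\{1,2\}^k}F_w(I)}$, equivalently the unique nonempty compact set with $S_\alpha=I\cup F_1(S_\alpha)\cup F_2(S_\alpha)$. *)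

theory Defs
  imports "HOL-Analysis.Analysis"
begin

definition hausdorff_pre :: "real \<Rightarrow> real \<Rightarrow> 'a::metric_space set \<Rightarrow> ennreal" where
  "hausdorff_pre s \<delta> A =
     (INF U \<in> {U :: nat \<Rightarrow> 'a set. A \<subseteq> (\<Union>i. U i) \<and>
                  (\<forall>i. bounded (U i) \<and> diameter (U i) \<le> \<delta>)}.
        (\<Sum>i. ennreal (diameter (U i) powr s)))"

definition hausdorff_measure :: "real \<Rightarrow> 'a::metric_space set \<Rightarrow> ennreal" where
  "hausdorff_measure s A = (SUP \<delta> \<in> {0<..}. hausdorff_pre s \<delta> A)"

definition hausdorff_dim :: "'a::metric_space set \<Rightarrow> real" where
  "hausdorff_dim A = Inf {s::real. 0 \<le> s \<and> hausdorff_measure s A = 0}"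

definition rot :: "real \<times> real \<Rightarrow> real \<times> real" where
  "rot x = (- snd x, fst x)"

definition Fmap :: "real \<Rightarrow> nat \<Rightarrow> real \<times> real \<Rightarrow> real \<times> real" where
  "Fmap \<alpha> j x = (if j = 1 then (1, 0) else (-1, 0)) + \<alpha> *\<^sub>R rot x"

fun Fword :: "real \<Rightarrow> nat list \<Rightarrow> real \<times> real \<Rightarrow> real \<times> real" where
  "Fword \<alpha> [] = id"
| "Fword \<alpha> (j # w) = Fmap \<alpha> j \<circ> Fword \<alpha> w"

definition Iseg :: "(real \<times> real) set" where
  "Iseg = {(t, 0) | t. -1 \<le> t \<and> t \<le> 1}"

definition S :: "real \<Rightarrow> (real \<times> real) set" where
  "S \<alpha> = closure (\<Union>w \<in> lists {1, 2}. Fword \<alpha> w ` Iseg)"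

end

theory Submission
  imports Defs "HOL-Real_Asymp.Real_Asymp"
begin

text \<open>Upper bound: for every \<open>n\<close>, \<open>S \<alpha>\<close> is covered by the \<open>2\<^sup>n\<close> images of a fixed
  invariant ball under the words of length \<open>n\<close>, together with the images of short pieces of
  \<open>I\<close> under the finitely many shorter words; when \<open>s > 1\<close> and \<open>2 \<alpha>\<^sup>s < 1\<close> the
  \<open>s\<close>-sums of these covers become arbitrarily small.

  Lower bound: every 0-1 sequence \<open>e\<close> is the address of a point of \<open>S \<alpha>\<close>, whose coordinates
  are power series in \<open>-\<alpha>\<^sup>2\<close> with coefficients \<open>\<plusminus>1\<close>. Since \<open>\<alpha>\<^sup>2 < 1/2\<close>, the first
  position \<open>m\<close> where two addresses differ dominates, so the points are at distance at least a
  constant times \<open>\<alpha>\<^sup>m\<close>. Hence the binary number \<open>0.e\<^sub>0e\<^sub>1\<dots>\<close>, which takes every value in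
  \<open>[0,1]\<close>, is a H\<ouml>lder function of the point with exponent \<open>s\<^sub>0 = - log 2 / log \<alpha>\<close>, so
  covering \<open>[0,1]\<close> shows that the \<open>s\<^sub>0\<close>-dimensional Hausdorff measure of \<open>S \<alpha>\<close> is positive.\<close>

lemma power_powr_swap: "0 < (x::real) \<Longrightarrow> (x ^ n) powr s = (x powr s) ^ n"
  by (simp add: powr_realpow[symmetric] powr_powr powr_power mult.commute)

lemma abs_suminf_le_geometric:
  fixes f :: "nat \<Rightarrow> real"
  assumes f: "\<And>n. \<bar>f n\<bar> \<le> c * q ^ n" and q: "0 \<le> q" "q < 1"
  shows "summable f" "\<bar>suminf f\<bar> \<le> c / (1 - q)"
proof -
  have geom: "summable (\<lambda>n. c * q ^ n)" using q by (intro summable_mult summable_geometric) simp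
  show "summable f" by (rule summable_comparison_test'[OF geom, of 0]) (use f in simp)
  have abs: "summable (\<lambda>n. \<bar>f n\<bar>)" by (rule summable_rabs_comparison_test[OF _ geom]) (use f in auto)
  have "\<bar>suminf f\<bar> \<le> (\<Sum>n. \<bar>f n\<bar>)" by (rule summable_rabs[OF abs])
  also have "\<dots> \<le> (\<Sum>n. c * q ^ n)" by (rule suminf_le[OF f abs geom])
  also have "\<dots> = c / (1 - q)" using q by (simp add: suminf_mult suminf_geometric)
  finally show "\<bar>suminf f\<bar> \<le> c / (1 - q)" .
qed

section \<open>Hausdorff measure and dimension\<close>

lemma hausdorff_pre_le_finite_cover:
  fixes f :: "'i \<Rightarrow> 'a::metric_space set"
  assumes J: "finite J" and cover: "A \<subseteq> (\<Union>j\<in>J. f j)" and "0 \<le> \<delta>"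
    and small: "\<And>j. j \<in> J \<Longrightarrow> bounded (f j) \<and> diameter (f j) \<le> \<delta>"
  shows "hausdorff_pre s \<delta> A \<le> ennreal (\<Sum>j\<in>J. diameter (f j) powr s)"
proof -
  obtain e where e: "bij_betw e {..<card J} J"
    using ex_bij_betw_nat_finite[OF J] atLeast0LessThan by auto
  define U where "U i = (if i < card J then f (e i) else {})" for i
  have "U \<in> {U. A \<subseteq> (\<Union>i. U i) \<and> (\<forall>i. bounded (U i) \<and> diameter (U i) \<le> \<delta>)}"
  proof safe
    fix x assume "x \<in> A"
    then obtain j where "j \<in> J" "x \<in> f j" using cover by auto
    then obtain i where "i < card J" "e i = j" using e unfolding bij_betw_def by force
    then show "x \<in> (\<Union>i. U i)" using \<open>x \<in> f j\<close> by (auto simp: U_def)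
  next
    fix i
    have "i < card J \<Longrightarrow> e i \<in> J" using e by (auto simp: bij_betw_def)
    then show "bounded (U i)" "diameter (U i) \<le> \<delta>" using small \<open>0 \<le> \<delta>\<close> by (auto simp: U_def)
  qed
  then have "hausdorff_pre s \<delta> A \<le> (\<Sum>i. ennreal (diameter (U i) powr s))"
    unfolding hausdorff_pre_def by (rule INF_lower)
  also have "\<dots> = (\<Sum>i<card J. ennreal (diameter (U i) powr s))"
    by (rule suminf_finite) (auto simp: U_def)
  also have "\<dots> = ennreal (\<Sum>i<card J. diameter (f (e i)) powr s)"
    by (simp add: U_def)
  also have "(\<Sum>i<card J. diameter (f (e i)) powr s) = (\<Sum>j\<in>J. diameter (f j) powr s)"
    by (rule sum.reindex_bij_betw[OF e])
  finally show ?thesis .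
qed

lemma hausdorff_pre_antimono: "\<delta> \<le> \<delta>' \<Longrightarrow> hausdorff_pre s \<delta>' A \<le> hausdorff_pre s \<delta> A"
  unfolding hausdorff_pre_def by (rule INF_superset_mono) (use order_trans in blast)+

lemma hausdorff_measure_eq_0_iff:
  "hausdorff_measure s A = 0 \<longleftrightarrow> (\<forall>\<delta>>0. hausdorff_pre s \<delta> A = 0)"
  unfolding hausdorff_measure_def by (auto simp: bot_ennreal[symmetric])

lemma hausdorff_measure_eq_0_mono:
  fixes A :: "'a::metric_space set"
  assumes zero: "hausdorff_measure s A = 0" and "s \<le> t"
  shows "hausdorff_measure t A = 0"
  unfolding hausdorff_measure_eq_0_iff
proof (intro allI impI)
  fix \<delta> :: real assume "0 < \<delta>"
  define d where "d = min \<delta> 1"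
  have d: "0 < d" "d \<le> 1" "d \<le> \<delta>" using \<open>0 < \<delta>\<close> by (auto simp: d_def)
  have "hausdorff_pre t \<delta> A \<le> hausdorff_pre t d A" by (rule hausdorff_pre_antimono[OF d(3)])
  also have "\<dots> \<le> hausdorff_pre s d A"
    unfolding hausdorff_pre_def
  proof (rule INF_mono)
    fix U :: "nat \<Rightarrow> 'a set"
    assume U: "U \<in> {U. A \<subseteq> (\<Union>i. U i) \<and> (\<forall>i. bounded (U i) \<and> diameter (U i) \<le> d)}"
    have "(\<Sum>i. ennreal (diameter (U i) powr t)) \<le> (\<Sum>i. ennreal (diameter (U i) powr s))"
    proof (rule suminf_le)
      fix i
      have "0 \<le> diameter (U i)" "diameter (U i) \<le> 1"
        using U d(2) diameter_ge_0[of "U i"] by (auto intro: order_trans)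
      then show "ennreal (diameter (U i) powr t) \<le> ennreal (diameter (U i) powr s)"
        using \<open>s \<le> t\<close> by (intro ennreal_leI powr_mono') auto
    qed (rule summableI)+
    then show "\<exists>V\<in>{U. A \<subseteq> (\<Union>i. U i) \<and> (\<forall>i. bounded (U i) \<and> diameter (U i) \<le> d)}.
        (\<Sum>i. ennreal (diameter (V i) powr t)) \<le> (\<Sum>i. ennreal (diameter (U i) powr s))"
      using U by blast
  qed
  also have "\<dots> = 0" using zero d(1) unfolding hausdorff_measure_eq_0_iff by blast
  finally show "hausdorff_pre t \<delta> A = 0" by simp
qed

lemma hausdorff_dim_eqI:
  fixes A :: "'a::metric_space set"
  assumes "0 \<le> s0" and pos: "hausdorff_measure s0 A \<noteq> 0"
    and zero: "\<And>s. s0 < s \<Longrightarrow> hausdorff_measure s A = 0"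
  shows "hausdorff_dim A = s0"
proof -
  define T where "T = {s. 0 \<le> s \<and> hausdorff_measure s A = 0}"
  have lower: "s0 \<le> s" if "s \<in> T" for s
    using that pos hausdorff_measure_eq_0_mono[of s A s0] by (force simp: T_def)
  have upper: "s \<in> T" if "s0 < s" for s
    using that zero \<open>0 \<le> s0\<close> by (simp add: T_def)
  have "T \<noteq> {}" using upper[of "s0 + 1"] by auto
  then have "s0 \<le> Inf T" by (rule cInf_greatest) (use lower in blast)
  moreover have "Inf T \<le> s0"
  proof (rule field_le_epsilon)
    fix \<epsilon> :: real assume "0 < \<epsilon>"
    have "bdd_below T" unfolding T_def by (rule bdd_belowI[of _ 0]) auto
    moreover have "s0 + \<epsilon> \<in> T" using upper \<open>0 < \<epsilon>\<close> by simp
    ultimately show "Inf T \<le> s0 + \<epsilon>" by (intro cInf_lower)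
  qed
  ultimately show ?thesis unfolding hausdorff_dim_def T_def by linarith
qed

lemma unit_interval_cover_bound:
  fixes V :: "nat \<Rightarrow> real set"
  assumes cover: "{0..1} \<subseteq> (\<Union>i. V i)"
    and small: "\<And>i x y. x \<in> V i \<Longrightarrow> y \<in> V i \<Longrightarrow> \<bar>x - y\<bar> \<le> d i" and d: "\<And>i. 0 \<le> d i"
  shows "1 \<le> (\<Sum>i. ennreal (2 * d i))"
proof -
  define c where "c i = (SOME x. x \<in> V i)" for i
  define W where "W i = (if V i = {} then {} else {c i - d i .. c i + d i})" for i
  have "V i \<subseteq> W i" for i
  proof
    fix x assume "x \<in> V i"
    then have "c i \<in> V i" unfolding c_def by (rule someI)
    then have "\<bar>x - c i\<bar> \<le> d i" using small \<open>x \<in> V i\<close> by blast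
    then show "x \<in> W i" using \<open>x \<in> V i\<close> by (auto simp: W_def abs_le_iff)
  qed
  then have "{0..1} \<subseteq> (\<Union>i. W i)" using cover by (meson SUP_mono' order_trans)
  moreover have W: "range W \<subseteq> sets lborel" by (auto simp: W_def)
  ultimately have "emeasure lborel {0..1::real} \<le> emeasure lborel (\<Union>i. W i)"
    by (intro emeasure_mono) auto
  also have "\<dots> \<le> (\<Sum>i. emeasure lborel (W i))" by (rule emeasure_subadditive_countably[OF W])
  also have "\<dots> \<le> (\<Sum>i. ennreal (2 * d i))"
  proof (rule suminf_le)
    show "emeasure lborel (W i) \<le> ennreal (2 * d i)" for i using d[of i] by (simp add: W_def)
  qed (rule summableI)+
  finally show ?thesis by simp
qed

lemma hausdorff_measure_nonzero_if_holder_onto_unit_interval: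
  fixes P :: "'b \<Rightarrow> 'a::metric_space" and g :: "'b \<Rightarrow> real"
  assumes "range P \<subseteq> A" and onto: "{0..1} \<subseteq> range g" and "0 < L" "0 \<le> s"
    and holder: "\<And>e e'. \<bar>g e - g e'\<bar> \<le> L * dist (P e) (P e') powr s"
  shows "hausdorff_measure s A \<noteq> 0"
proof -
  have "ennreal (1 / (2 * L)) \<le> hausdorff_pre s 1 A"
    unfolding hausdorff_pre_def
  proof (rule INF_greatest)
    fix U :: "nat \<Rightarrow> 'a set"
    assume "U \<in> {U. A \<subseteq> (\<Union>i. U i) \<and> (\<forall>i. bounded (U i) \<and> diameter (U i) \<le> 1)}"
    then have cover: "A \<subseteq> (\<Union>i. U i)" and bounded: "\<And>i. bounded (U i)" by auto
    define d where "d i = L * diameter (U i) powr s" for i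
    have "{0..1} \<subseteq> (\<Union>i. g ` {e. P e \<in> U i})"
    proof
      fix x :: real assume "x \<in> {0..1}"
      then obtain e where "x = g e" using onto by blast
      moreover obtain i where "P e \<in> U i" using cover \<open>range P \<subseteq> A\<close> by blast
      ultimately show "x \<in> (\<Union>i. g ` {e. P e \<in> U i})" by blast
    qed
    moreover have "\<bar>x - y\<bar> \<le> d i" if xy: "x \<in> g ` {e. P e \<in> U i}" "y \<in> g ` {e. P e \<in> U i}" for i x y
    proof -
      obtain e e' where e: "P e \<in> U i" "x = g e" and e': "P e' \<in> U i" "y = g e'"
        using xy by blast
      have "dist (P e) (P e') \<le> diameter (U i)" by (rule diameter_bounded_bound[OF bounded e(1) e'(1)])
      then have "dist (P e) (P e') powr s \<le> diameter (U i) powr s" using \<open>0 \<le> s\<close> by (intro powr_mono2) auto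
      then show ?thesis using holder[of e e'] \<open>0 < L\<close> e e' by (simp add: d_def order_trans)
    qed
    moreover have "0 \<le> d i" for i using \<open>0 < L\<close> by (simp add: d_def)
    ultimately have "1 \<le> (\<Sum>i. ennreal (2 * d i))" by (rule unit_interval_cover_bound)
    also have "\<dots> = (\<Sum>i. ennreal (2 * L) * ennreal (diameter (U i) powr s))"
      using \<open>0 < L\<close> by (simp add: d_def ennreal_mult[symmetric] mult.assoc)
    also have "\<dots> = ennreal (2 * L) * (\<Sum>i. ennreal (diameter (U i) powr s))" by simp
    finally have "ennreal (1 / (2 * L)) * 1 \<le> ennreal (1 / (2 * L)) * (ennreal (2 * L) * (\<Sum>i. ennreal (diameter (U i) powr s)))"
      by (rule mult_left_mono) simp
    also have "\<dots> = (ennreal (1 / (2 * L)) * ennreal (2 * L)) * (\<Sum>i. ennreal (diameter (U i) powr s))"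
      by (simp only: mult.assoc)
    also have "ennreal (1 / (2 * L)) * ennreal (2 * L) = 1" using \<open>0 < L\<close> by (simp flip: ennreal_mult)
    finally show "ennreal (1 / (2 * L)) \<le> (\<Sum>i. ennreal (diameter (U i) powr s))" by simp
  qed
  moreover have "hausdorff_pre s 1 A \<le> hausdorff_measure s A"
    unfolding hausdorff_measure_def by (rule SUP_upper) simp
  moreover have "0 < ennreal (1 / (2 * L))" using \<open>0 < L\<close> by simp
  ultimately show ?thesis by auto
qed

section \<open>Geometry of the iterated function system\<close>

lemma norm_rot: "norm (rot x) = norm x"
  by (cases x) (simp add: rot_def norm_Pair add.commute)

lemma dist_Fmap: "dist (Fmap a j x) (Fmap a j y) = \<bar>a\<bar> * dist x y"
proof -
  have "Fmap a j x - Fmap a j y = a *\<^sub>R rot (x - y)"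
    by (simp add: Fmap_def rot_def prod_eq_iff algebra_simps)
  then show ?thesis by (simp add: dist_norm norm_rot)
qed

lemma dist_Fword: "dist (Fword a w x) (Fword a w y) = \<bar>a\<bar> ^ length w * dist x y"
  by (induction w arbitrary: x y) (simp_all add: dist_Fmap)

lemma Fword_append: "Fword a (u @ v) = Fword a u \<circ> Fword a v"
  by (induction u) auto

lemma continuous_on_Fword: "continuous_on A (Fword a w)"
proof (induction w)
  case (Cons j w)
  have "continuous_on A (Fmap a j \<circ> Fword a w)"
    unfolding Fmap_def rot_def by (intro continuous_on_compose Cons continuous_intros)
  then show ?case by simp
qed simp

lemma compact_Fword_image: "compact K \<Longrightarrow> compact (Fword a w ` K)"
  by (rule compact_continuous_image[OF continuous_on_Fword])

lemma diameter_Fword_image_le: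
  assumes "bounded K"
  shows "diameter (Fword a w ` K) \<le> \<bar>a\<bar> ^ length w * diameter K"
proof (rule diameter_le)
  show "Fword a w ` K \<noteq> {} \<or> 0 \<le> \<bar>a\<bar> ^ length w * diameter K"
    by (simp add: diameter_ge_0)
  fix x y assume "x \<in> Fword a w ` K" "y \<in> Fword a w ` K"
  then obtain p q where "p \<in> K" "q \<in> K" "x = Fword a w p" "y = Fword a w q" by auto
  then show "norm (x - y) \<le> \<bar>a\<bar> ^ length w * diameter K"
    using dist_Fword[of a w p q] diameter_bounded_bound[OF assms, of p q]
    by (simp add: dist_norm mult_left_mono)
qed

lemma Fword_cball_subset:
  assumes "0 \<le> a" "a < 1"
  shows "Fword a w ` cball 0 (1 / (1 - a)) \<subseteq> cball 0 (1 / (1 - a))"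
proof -
  have "norm (Fmap a j x) \<le> 1 / (1 - a)" if "norm x \<le> 1 / (1 - a)" for j x
  proof -
    have "norm (if j = 1 then (1::real, 0::real) else (-1, 0)) = 1" by (simp add: norm_Pair)
    then have "norm (Fmap a j x) \<le> 1 + a * norm x"
      unfolding Fmap_def using norm_triangle_ineq[of "if j = 1 then (1::real, 0::real) else (-1, 0)" "a *\<^sub>R rot x"] assms
      by (simp add: norm_rot)
    also have "\<dots> \<le> 1 + a * (1 / (1 - a))" using mult_left_mono[OF that \<open>0 \<le> a\<close>] by simp
    also have "\<dots> = 1 / (1 - a)" using assms by (simp add: field_simps)
    finally show ?thesis .
  qed
  then have "norm (Fword a w x) \<le> 1 / (1 - a)" if "norm x \<le> 1 / (1 - a)" for x
    using that by (induction w) auto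
  then show ?thesis by auto
qed

lemma Iseg_subset_cball:
  assumes "0 \<le> a" "a < 1"
  shows "Iseg \<subseteq> cball 0 (1 / (1 - a))"
proof -
  have "1 \<le> 1 / (1 - a)" using assms by (simp add: field_simps)
  then show ?thesis by (auto simp: Iseg_def norm_Pair)
qed

definition Iseg_piece :: "nat \<Rightarrow> nat \<Rightarrow> (real \<times> real) set" where
  "Iseg_piece N j = (\<lambda>t. (t, 0)) ` {-1 + 2 * real j / real N .. -1 + 2 * (real j + 1) / real N}"

lemma compact_Iseg_piece: "compact (Iseg_piece N j)"
  unfolding Iseg_piece_def by (intro compact_continuous_image continuous_intros) auto

lemma diameter_Iseg_piece_le:
  assumes "0 < N"
  shows "diameter (Iseg_piece N j) \<le> 2 / real N"
  unfolding Iseg_piece_def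
proof (rule diameter_le)
  fix x y assume "x \<in> (\<lambda>t. (t, 0::real)) ` {-1 + 2 * real j / real N .. -1 + 2 * (real j + 1) / real N}"
    "y \<in> (\<lambda>t. (t, 0::real)) ` {-1 + 2 * real j / real N .. -1 + 2 * (real j + 1) / real N}"
  moreover have "-1 + 2 * (real j + 1) / real N - (-1 + 2 * real j / real N) = 2 / real N"
    using assms by (simp add: field_simps)
  ultimately show "norm (x - y) \<le> 2 / real N" by (auto simp: norm_Pair)
qed (use assms in auto)

lemma Iseg_subset_pieces:
  assumes "0 < N"
  shows "Iseg \<subseteq> (\<Union>j<N. Iseg_piece N j)"
proof
  fix p assume "p \<in> Iseg"
  then obtain t where p: "p = (t, 0)" and t: "-1 \<le> t" "t \<le> 1" by (auto simp: Iseg_def)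
  define y where "y = (t + 1) * real N / 2"
  have y: "0 \<le> y" "y \<le> real N" using t assms by (auto simp: y_def)
  define j where "j = min (nat \<lfloor>y\<rfloor>) (N - 1)"
  have "real j \<le> y \<and> y \<le> real j + 1"
  proof (cases "nat \<lfloor>y\<rfloor> \<le> N - 1")
    case True
    then have "real j = of_int \<lfloor>y\<rfloor>" using y(1) by (simp add: j_def)
    then show ?thesis by linarith
  next
    case False
    then have "int N \<le> \<lfloor>y\<rfloor>" using y(1) by (simp add: le_nat_iff)
    then have "real N \<le> y" by (simp add: le_floor_iff)
    moreover have "real j = real N - 1" using False assms by (simp add: j_def of_nat_diff)
    ultimately show ?thesis using y by linarith
  qed
  moreover have "j < N" using assms by (simp add: j_def)
  ultimately have "-1 + 2 * real j / real N \<le> t \<and> t \<le> -1 + 2 * (real j + 1) / real N"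
    using assms by (simp add: y_def field_simps)
  then have "p \<in> Iseg_piece N j" unfolding Iseg_piece_def p by auto
  then show "p \<in> (\<Union>j<N. Iseg_piece N j)" using \<open>j < N\<close> by blast
qed

section \<open>Upper bound\<close>

lemma S_subset_word_images:
  assumes "0 \<le> a" "a < 1" "0 < N"
  shows "S a \<subseteq> (\<Union>w\<in>{w. set w \<subseteq> {1,2} \<and> length w = n}. Fword a w ` cball 0 (1 / (1 - a)))
           \<union> (\<Union>w\<in>{w. set w \<subseteq> {1,2} \<and> length w < n}. \<Union>j<N. Fword a w ` Iseg_piece N j)"
    (is "_ \<subseteq> ?C")
  unfolding S_def
proof (rule closure_minimal)
  have "finite {w::nat list. set w \<subseteq> {1,2} \<and> length w \<le> n}" by (rule finite_lists_length_le) simp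
  then have fin: "finite {w::nat list. set w \<subseteq> {1,2} \<and> length w = n}"
    "finite {w::nat list. set w \<subseteq> {1,2} \<and> length w < n}"
    by (auto elim: finite_subset[rotated])
  have "closed (\<Union>j<N. Fword a w ` Iseg_piece N j)" for w
    by (rule closed_UN) (simp_all add: compact_imp_closed compact_Fword_image compact_Iseg_piece)
  then show "closed ?C"
    using fin by (intro closed_Un closed_UN) (simp_all add: compact_imp_closed compact_Fword_image)
  show "(\<Union>w\<in>lists {1, 2}. Fword a w ` Iseg) \<subseteq> ?C"
  proof (rule UN_least, rule image_subsetI)
    fix u p assume u: "u \<in> lists {1::nat, 2}" and p: "p \<in> Iseg"
    show "Fword a u p \<in> ?C"
    proof (cases "n \<le> length u")
      case True
      have "Fword a u p = Fword a (take n u) (Fword a (drop n u) p)"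
        by (metis Fword_append append_take_drop_id comp_apply)
      moreover have "Fword a (drop n u) p \<in> cball 0 (1 / (1 - a))"
        using Fword_cball_subset[OF assms(1,2)] Iseg_subset_cball[OF assms(1,2)] p by blast
      ultimately have "Fword a u p \<in> Fword a (take n u) ` cball 0 (1 / (1 - a))" by simp
      moreover have "take n u \<in> {w. set w \<subseteq> {1,2} \<and> length w = n}"
        using u True set_take_subset[of n u] by auto
      ultimately show ?thesis by (intro UnI1 UN_I)
    next
      case False
      then obtain j where "j < N" "p \<in> Iseg_piece N j" using Iseg_subset_pieces[OF assms(3)] p by blast
      then have "Fword a u p \<in> (\<Union>j<N. Fword a u ` Iseg_piece N j)" by blast
      moreover have "u \<in> {w. set w \<subseteq> {1,2} \<and> length w < n}" using u False by auto
      ultimately show ?thesis by (rule UnI2[OF UN_I, rotated])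
    qed
  qed
qed

lemma hausdorff_pre_S_le:
  assumes a: "0 \<le> a" "a < 1" and "0 < N" "0 \<le> s"
    and \<delta>: "a ^ n * (2 / (1 - a)) \<le> \<delta>" "2 / real N \<le> \<delta>"
  shows "hausdorff_pre s \<delta> (S a) \<le> ennreal (2 ^ n * (a ^ n * (2 / (1 - a))) powr s
           + real (card {w::nat list. set w \<subseteq> {1,2} \<and> length w < n} * N) * (2 / real N) powr s)"
proof -
  define B where "B = cball (0::real \<times> real) (1 / (1 - a))"
  define Wn where "Wn = {w::nat list. set w \<subseteq> {1,2} \<and> length w = n}"
  define Wl where "Wl = {w::nat list. set w \<subseteq> {1,2} \<and> length w < n}"
  define J where "J = Inl ` Wn \<union> Inr ` (Wl \<times> {..<N})"
  define f where "f = case_sum (\<lambda>w. Fword a w ` B) (\<lambda>(w, j). Fword a w ` Iseg_piece N j)"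
  have "finite {w::nat list. set w \<subseteq> {1,2} \<and> length w \<le> n}" by (rule finite_lists_length_le) simp
  then have fin: "finite Wn" "finite Wl" unfolding Wn_def Wl_def by (auto elim: finite_subset[rotated])
  have card_Wn: "card Wn = 2 ^ n"
    using card_lists_length_eq[of "{1::nat,2}" n] by (simp add: Wn_def numeral_2_eq_2)
  have compact: "compact (f k)" for k
    by (cases k) (auto simp: f_def B_def intro!: compact_Fword_image compact_Iseg_piece)
  have diam_Inl: "diameter (f (Inl w)) \<le> a ^ n * (2 / (1 - a))" if "w \<in> Wn" for w
    using diameter_Fword_image_le[of B a w] that a by (simp add: f_def B_def Wn_def)
  have diam_Inr: "diameter (f (Inr (w, j))) \<le> 2 / real N" if "w \<in> Wl" for w j
  proof -
    have "diameter (f (Inr (w, j))) \<le> a ^ length w * diameter (Iseg_piece N j)"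
      using diameter_Fword_image_le[of "Iseg_piece N j" a w] a compact_Iseg_piece[THEN compact_imp_bounded]
      by (simp add: f_def)
    also have "\<dots> \<le> 1 * (2 / real N)"
      using a diameter_Iseg_piece_le[OF \<open>0 < N\<close>] diameter_ge_0[OF compact_Iseg_piece[THEN compact_imp_bounded]]
      by (intro mult_mono power_le_one) auto
    finally show ?thesis by simp
  qed
  have "(\<Union>k\<in>J. f k) = (\<Union>w\<in>Wn. Fword a w ` B) \<union> (\<Union>w\<in>Wl. \<Union>j<N. Fword a w ` Iseg_piece N j)"
    by (simp add: J_def f_def) blast
  then have "S a \<subseteq> (\<Union>k\<in>J. f k)"
    using S_subset_word_images[OF a \<open>0 < N\<close>, of n] by (simp add: B_def Wn_def Wl_def)
  moreover have "bounded (f k) \<and> diameter (f k) \<le> \<delta>" if "k \<in> J" for k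
    using that compact[THEN compact_imp_bounded] diam_Inl diam_Inr \<delta> by (fastforce simp: J_def intro: order_trans)
  ultimately have pre: "hausdorff_pre s \<delta> (S a) \<le> ennreal (\<Sum>k\<in>J. diameter (f k) powr s)"
    using fin order_trans[OF _ \<delta>(2)] by (intro hausdorff_pre_le_finite_cover) (auto simp: J_def)
  have "(\<Sum>k\<in>J. diameter (f k) powr s)
      = (\<Sum>w\<in>Wn. diameter (f (Inl w)) powr s) + (\<Sum>x\<in>Wl \<times> {..<N}. diameter (f (Inr x)) powr s)"
    unfolding J_def using fin by (subst sum.union_disjoint) (auto simp: sum.reindex)
  also have "\<dots> \<le> real (card Wn) * (a ^ n * (2 / (1 - a))) powr s
                 + real (card (Wl \<times> {..<N})) * (2 / real N) powr s"
    using diam_Inl diam_Inr \<open>0 \<le> s\<close> compact[THEN compact_imp_bounded, THEN diameter_ge_0]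
    by (intro add_mono sum_bounded_above powr_mono2) auto
  also have "\<dots> = 2 ^ n * (a ^ n * (2 / (1 - a))) powr s
      + real (card {w::nat list. set w \<subseteq> {1,2} \<and> length w < n} * N) * (2 / real N) powr s"
    using fin by (simp add: card_Wn card_cartesian_product Wl_def)
  finally show ?thesis using pre by (meson ennreal_leI order_trans)
qed

lemma hausdorff_measure_S_eq_0:
  assumes a: "0 < a" "a < 1" and s: "1 < s" "2 * a powr s < 1"
  shows "hausdorff_measure s (S a) = 0"
  unfolding hausdorff_measure_eq_0_iff
proof (intro allI impI)
  fix \<delta> :: real assume "0 < \<delta>"
  have "hausdorff_pre s \<delta> (S a) \<le> 0 + ennreal \<epsilon>" if "0 < \<epsilon>" for \<epsilon>
  proof -
    define r where "r = 2 / (1 - a)"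
    have "0 < r" using a by (simp add: r_def)
    then have "2 ^ n * (a ^ n * r) powr s = (2 * a powr s) ^ n * r powr s" for n
      using a by (simp add: powr_mult power_powr_swap power_mult_distrib)
    moreover have "(\<lambda>n. (2 * a powr s) ^ n * r powr s) \<longlonglongrightarrow> 0 * r powr s"
      using s by (intro tendsto_mult LIMSEQ_power_zero) auto
    ultimately have mass: "(\<lambda>n. 2 ^ n * (a ^ n * r) powr s) \<longlonglongrightarrow> 0" by (simp add: mult.assoc)
    have diam: "(\<lambda>n. a ^ n * r) \<longlonglongrightarrow> 0"
      using a by (intro tendsto_mult_left_zero LIMSEQ_power_zero) auto
    have "\<forall>\<^sub>F n in sequentially. 2 ^ n * (a ^ n * r) powr s < \<epsilon> / 2 \<and> a ^ n * r < \<delta>"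
      by (intro eventually_conj order_tendstoD(2)[OF mass] order_tendstoD(2)[OF diam])
         (use \<open>0 < \<epsilon>\<close> \<open>0 < \<delta>\<close> in auto)
    then obtain n where n: "2 ^ n * (a ^ n * r) powr s < \<epsilon> / 2" "a ^ n * r < \<delta>"
      using eventually_happens'[OF sequentially_bot] by blast
    define C where "C = real (card {w::nat list. set w \<subseteq> {1,2} \<and> length w < n})"
    have mass': "(\<lambda>N::nat. C * real N * (2 / real N) powr s) \<longlonglongrightarrow> 0" using s by real_asymp
    have diam': "(\<lambda>N::nat. 2 / real N) \<longlonglongrightarrow> 0" by real_asymp
    have "\<forall>\<^sub>F N in sequentially. C * real N * (2 / real N) powr s < \<epsilon> / 2 \<and> 2 / real N < \<delta> \<and> 0 < N"
      by (intro eventually_conj order_tendstoD(2)[OF mass'] order_tendstoD(2)[OF diam'] eventually_gt_at_top)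
         (use \<open>0 < \<epsilon>\<close> \<open>0 < \<delta>\<close> in auto)
    then obtain N where N: "C * real N * (2 / real N) powr s < \<epsilon> / 2" "2 / real N < \<delta>" "0 < N"
      using eventually_happens'[OF sequentially_bot] by blast
    have "hausdorff_pre s \<delta> (S a) \<le> ennreal (2 ^ n * (a ^ n * r) powr s
        + real (card {w::nat list. set w \<subseteq> {1,2} \<and> length w < n} * N) * (2 / real N) powr s)"
      unfolding r_def using a s n N by (intro hausdorff_pre_S_le) (auto simp: r_def)
    also have "\<dots> \<le> ennreal \<epsilon>" using n N by (intro ennreal_leI) (simp add: C_def)
    finally show ?thesis by simp
  qed
  then have "hausdorff_pre s \<delta> (S a) \<le> 0" by (rule ennreal_le_epsilon)
  then show "hausdorff_pre s \<delta> (S a) = 0" by simp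
qed

section \<open>Lower bound\<close>

definition sgn_bit :: "(nat \<Rightarrow> bool) \<Rightarrow> nat \<Rightarrow> real" where
  "sgn_bit e k = (if e k then 1 else -1)"

definition alt_series :: "real \<Rightarrow> (nat \<Rightarrow> real) \<Rightarrow> real" where
  "alt_series a t = (\<Sum>j. t j * (- (a ^ 2)) ^ j)"

text \<open>The point with address \<open>e\<close> is the limit of \<open>F\<^sub>e\<^sub>0 \<circ> \<dots> \<circ> F\<^sub>e\<^sub>n (0)\<close>
  (letter 1 for \<open>True\<close>, 2 for \<open>False\<close>). Since \<open>rot \<circ> rot = - id\<close>, the even-indexed
  translations contribute to the first coordinate and the odd-indexed ones to the second.\<close>

definition code_point :: "real \<Rightarrow> (nat \<Rightarrow> bool) \<Rightarrow> real \<times> real" where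
  "code_point a e = (alt_series a (\<lambda>j. sgn_bit e (2 * j)), a * alt_series a (\<lambda>j. sgn_bit e (2 * j + 1)))"

definition letter :: "(nat \<Rightarrow> bool) \<Rightarrow> nat \<Rightarrow> nat" where
  "letter e k = (if e k then 1 else 2)"

definition binary_value :: "(nat \<Rightarrow> bool) \<Rightarrow> real" where
  "binary_value e = (\<Sum>k. (if e k then 1 else 0) / 2 ^ Suc k)"

definition separation_constant :: "real \<Rightarrow> real" where
  "separation_constant a = 2 - 2 * a ^ 2 / (1 - a ^ 2)"

text \<open>This is where \<open>\<alpha> < 1/\<surd>2\<close> enters: only for \<open>a\<^sup>2 < 1/2\<close> does the first
  differing term of two series \<open>\<Sum>\<^sub>j \<plusminus>(-a\<^sup>2)\<^sup>j\<close> dominate the rest of their difference.\<close>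

lemma separation_constant_pos: "a ^ 2 < 1/2 \<Longrightarrow> 0 < separation_constant a"
  by (simp add: separation_constant_def field_simps)

lemma alt_series_bound:
  fixes t :: "nat \<Rightarrow> real"
  assumes "\<And>j. \<bar>t j\<bar> \<le> 1" "a ^ 2 < 1"
  shows "summable (\<lambda>j. t j * (- (a ^ 2)) ^ j)" "\<bar>alt_series a t\<bar> \<le> 1 / (1 - a ^ 2)"
proof -
  have "\<bar>t j * (- (a ^ 2)) ^ j\<bar> \<le> 1 * (a ^ 2) ^ j" for j
    using assms(1)[of j] by (simp add: abs_mult power_abs mult_left_le_one_le)
  note geometric = abs_suminf_le_geometric[OF this _ assms(2)]
  then show "summable (\<lambda>j. t j * (- (a ^ 2)) ^ j)" by simp
  show "\<bar>alt_series a t\<bar> \<le> 1 / (1 - a ^ 2)" unfolding alt_series_def using geometric by simp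
qed

lemma abs_alt_series_diff_ge:
  fixes t t' :: "nat \<Rightarrow> real"
  assumes t: "\<And>i. \<bar>t i\<bar> \<le> 1" and t': "\<And>i. \<bar>t' i\<bar> \<le> 1" and eq: "\<And>i. i < j \<Longrightarrow> t i = t' i"
    and ne: "\<bar>t j - t' j\<bar> = 2" and a: "a ^ 2 < 1"
  shows "separation_constant a * (a ^ 2) ^ j \<le> \<bar>alt_series a t - alt_series a t'\<bar>"
proof -
  define q where "q = a ^ 2"
  have q: "0 \<le> q" "q < 1" using a by (auto simp: q_def)
  define f where "f i = (t i - t' i) * (- q) ^ i" for i
  have f: "\<bar>f i\<bar> \<le> 2 * q ^ i" for i
  proof -
    have "\<bar>t i - t' i\<bar> \<le> 2" using t[of i] t'[of i] by linarith
    then show ?thesis unfolding f_def using q by (simp add: abs_mult power_abs mult_right_mono)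
  qed
  have "summable f" using abs_suminf_le_geometric(1)[OF f q] .
  have "alt_series a t - alt_series a t' = suminf f"
    unfolding alt_series_def f_def q_def
    using suminf_diff[OF alt_series_bound(1)[OF t a] alt_series_bound(1)[OF t' a]]
    by (simp add: left_diff_distrib)
  also have "\<dots> = (\<Sum>n. f (n + j)) + (\<Sum>i<j. f i)" by (rule suminf_split_initial_segment[OF \<open>summable f\<close>])
  also have "(\<Sum>i<j. f i) = 0" by (rule sum.neutral) (auto simp: f_def eq)
  also have "(\<Sum>n. f (n + j)) = f j + (\<Sum>n. f (Suc n + j))"
    using suminf_split_head[OF summable_ignore_initial_segment[OF \<open>summable f\<close>, of j]] by simp
  finally have diff: "alt_series a t - alt_series a t' = f j + (\<Sum>n. f (Suc n + j))" by simp
  have "\<bar>f (Suc n + j)\<bar> \<le> (2 * q ^ Suc j) * q ^ n" for n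
    using f[of "Suc n + j"] by (simp add: power_add mult_ac)
  then have "\<bar>\<Sum>n. f (Suc n + j)\<bar> \<le> 2 * q ^ Suc j / (1 - q)" by (rule abs_suminf_le_geometric(2)[OF _ q])
  moreover have "\<bar>f j\<bar> = 2 * q ^ j" unfolding f_def using ne q by (simp add: abs_mult power_abs)
  moreover have "2 * q ^ Suc j / (1 - q) = (2 * q / (1 - q)) * q ^ j" by simp
  ultimately have "2 * q ^ j - (2 * q / (1 - q)) * q ^ j \<le> \<bar>alt_series a t - alt_series a t'\<bar>"
    unfolding diff by linarith
  then show ?thesis by (simp add: separation_constant_def q_def left_diff_distrib)
qed

lemma code_point_eq_Fmap:
  assumes "a ^ 2 < 1"
  shows "code_point a e = Fmap a (letter e 0) (code_point a (\<lambda>k. e (Suc k)))"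
proof -
  define b where "b = - (a ^ 2)"
  have summable: "summable (\<lambda>j. sgn_bit e (f j) * b ^ j)" for f
    unfolding b_def by (rule alt_series_bound(1)) (use assms in \<open>simp_all add: sgn_bit_def\<close>)
  have "(\<Sum>j. sgn_bit e (2 * Suc j) * b ^ Suc j) = (\<Sum>j. sgn_bit e (2 * j) * b ^ j) - sgn_bit e 0"
    using suminf_split_head[OF summable[of "\<lambda>j. 2 * j"]] by simp
  moreover have "(\<Sum>j. sgn_bit e (2 * Suc j) * b ^ Suc j) = b * (\<Sum>j. sgn_bit e (2 * Suc j) * b ^ j)"
    using suminf_mult[OF summable[of "\<lambda>j. 2 * Suc j"], of b] by (simp add: mult_ac)
  ultimately have "alt_series a (\<lambda>j. sgn_bit e (2 * j))
      = sgn_bit e 0 + b * alt_series a (\<lambda>j. sgn_bit (\<lambda>k. e (Suc k)) (2 * j + 1))"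
    unfolding alt_series_def b_def by (simp add: sgn_bit_def)
  then show ?thesis
    by (simp add: Fmap_def rot_def code_point_def prod_eq_iff b_def letter_def sgn_bit_def power2_eq_square)
qed

lemma code_point_eq_Fword:
  assumes "a ^ 2 < 1"
  shows "code_point a e = Fword a (map (letter e) [0..<n]) (code_point a (\<lambda>k. e (k + n)))"
proof (induction n)
  case (Suc n)
  have "code_point a (\<lambda>k. e (k + n)) = Fmap a (letter e n) (code_point a (\<lambda>k. e (k + Suc n)))"
    using code_point_eq_Fmap[OF assms, of "\<lambda>k. e (k + n)"] by (simp add: letter_def)
  then show ?case using Suc by (simp add: Fword_append)
qed simp

lemma norm_code_point_le:
  assumes "0 \<le> a" "a < 1"
  shows "norm (code_point a e) \<le> 2 / (1 - a ^ 2)"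
proof -
  have a2: "a ^ 2 < 1" using assms by (simp add: power_less_one_iff)
  have bound: "\<bar>alt_series a (\<lambda>j. sgn_bit e (f j))\<bar> \<le> 1 / (1 - a ^ 2)" for f
    by (rule alt_series_bound(2)) (simp_all add: sgn_bit_def a2)
  have "\<bar>a * alt_series a (\<lambda>j. sgn_bit e (2 * j + 1))\<bar> \<le> 1 * (1 / (1 - a ^ 2))"
    unfolding abs_mult using assms bound by (intro mult_mono) auto
  then have "norm (code_point a e) \<le> 1 / (1 - a ^ 2) + 1 / (1 - a ^ 2)"
    using norm_Pair_le[of "alt_series a (\<lambda>j. sgn_bit e (2 * j))" "a * alt_series a (\<lambda>j. sgn_bit e (2 * j + 1))"]
      bound[of "\<lambda>j. 2 * j"]
    unfolding code_point_def by simp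
  then show ?thesis by simp
qed

lemma code_point_in_S:
  assumes a: "0 < a" "a < 1"
  shows "code_point a e \<in> S a"
  unfolding S_def closure_approachable
proof (intro allI impI)
  fix \<epsilon> :: real assume "0 < \<epsilon>"
  define M where "M = 2 / (1 - a ^ 2)"
  have "(\<lambda>n. a ^ n * M) \<longlonglongrightarrow> 0" using a by (intro tendsto_mult_left_zero LIMSEQ_power_zero) auto
  from order_tendstoD(2)[OF this \<open>0 < \<epsilon>\<close>] obtain n where n: "a ^ n * M < \<epsilon>"
    using eventually_happens'[OF sequentially_bot] by blast
  define w where "w = map (letter e) [0..<n]"
  have "dist (Fword a w 0) (code_point a e) = dist (Fword a w 0) (Fword a w (code_point a (\<lambda>k. e (k + n))))"
    using code_point_eq_Fword[of a e n] a by (simp add: w_def power_less_one_iff)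
  also have "\<dots> = a ^ n * norm (code_point a (\<lambda>k. e (k + n)))"
    using a by (simp add: dist_Fword w_def)
  also have "\<dots> \<le> a ^ n * M"
    using norm_code_point_le[of a] a by (intro mult_left_mono) (auto simp: M_def)
  finally have "dist (Fword a w 0) (code_point a e) < \<epsilon>" using n by linarith
  moreover have "w \<in> lists {1, 2}" "0 \<in> Iseg" by (auto simp: w_def letter_def Iseg_def zero_prod_def)
  ultimately show "\<exists>y\<in>\<Union>w\<in>lists {1, 2}. Fword a w ` Iseg. dist y (code_point a e) < \<epsilon>" by blast
qed

fun greedy_rest :: "real \<Rightarrow> nat \<Rightarrow> real" where
  "greedy_rest x 0 = x"
| "greedy_rest x (Suc k) =
     (if 1 / 2 ^ Suc k \<le> greedy_rest x k then greedy_rest x k - 1 / 2 ^ Suc k else greedy_rest x k)"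

lemma greedy_rest_bounds: "0 \<le> x \<Longrightarrow> x \<le> 1 \<Longrightarrow> 0 \<le> greedy_rest x k \<and> greedy_rest x k \<le> 1 / 2 ^ k"
proof (induction k)
  case (Suc k)
  have "1 / (2::real) ^ k = 2 * (1 / 2 ^ Suc k)" by simp
  then show ?case using Suc by (auto simp del: power_Suc)
qed simp

lemma summable_binary_digits: "summable (\<lambda>k. (if e k then 1 else 0) / (2::real) ^ Suc k)"
  by (rule abs_suminf_le_geometric(1)[of _ "1/2" "1/2"]) (auto simp: power_divide)

lemma unit_interval_subset_range_binary_value: "{0..1} \<subseteq> range binary_value"
proof
  fix x :: real assume "x \<in> {0..1}"
  define e where "e k = (1 / 2 ^ Suc k \<le> greedy_rest x k)" for k
  have partial_sums: "(\<Sum>k<n. (if e k then 1 else 0) / (2::real) ^ Suc k) = x - greedy_rest x n" for n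
    by (induction n) (auto simp: e_def)
  have "(\<lambda>n. greedy_rest x n) \<longlonglongrightarrow> 0"
  proof (rule Lim_null_comparison)
    show "\<forall>\<^sub>F n in sequentially. norm (greedy_rest x n) \<le> (1/2) ^ n"
      using greedy_rest_bounds \<open>x \<in> {0..1}\<close> by (simp add: power_divide)
  qed (rule LIMSEQ_power_zero, simp)
  then have "(\<lambda>n. x - greedy_rest x n) \<longlonglongrightarrow> x - 0" by (intro tendsto_diff tendsto_const)
  then have "(\<lambda>k. (if e k then 1 else 0) / (2::real) ^ Suc k) sums x"
    unfolding sums_def partial_sums by simp
  then have "binary_value e = x" unfolding binary_value_def by (rule sums_unique[symmetric])
  then show "x \<in> range binary_value" by blast
qed

lemma abs_binary_value_diff_le:
  assumes eq: "\<And>k. k < m \<Longrightarrow> e k = e' k"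
  shows "\<bar>binary_value e - binary_value e'\<bar> \<le> 1 / 2 ^ m"
proof -
  define f where "f k = ((if e k then 1 else 0) - (if e' k then 1 else 0)) / (2::real) ^ Suc k" for k
  have "\<bar>f k\<bar> \<le> 1 * (1/2) ^ k" for k unfolding f_def by (auto simp: power_divide field_simps)
  then have "summable f" by (rule abs_suminf_le_geometric(1)) auto
  have "binary_value e - binary_value e' = suminf f"
    unfolding binary_value_def f_def
    using suminf_diff[OF summable_binary_digits summable_binary_digits] by (simp add: diff_divide_distrib)
  also have "\<dots> = (\<Sum>n. f (n + m)) + (\<Sum>i<m. f i)" by (rule suminf_split_initial_segment[OF \<open>summable f\<close>])
  also have "(\<Sum>i<m. f i) = 0" by (rule sum.neutral) (auto simp: f_def eq)
  finally have diff: "binary_value e - binary_value e' = (\<Sum>n. f (n + m))" by simp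
  have "\<bar>f (n + m)\<bar> \<le> (1 / 2 ^ Suc m) * (1/2) ^ n" for n
    unfolding f_def by (auto simp: power_add power_divide mult_ac)
  then have "\<bar>\<Sum>n. f (n + m)\<bar> \<le> (1 / 2 ^ Suc m) / (1 - 1/2)" by (rule abs_suminf_le_geometric(2)) auto
  then show ?thesis unfolding diff by simp
qed

lemma dist_code_point_ge:
  assumes a: "0 < a" "a ^ 2 < 1" and eq: "\<And>k. k < m \<Longrightarrow> e k = e' k" and ne: "e m \<noteq> e' m"
  shows "separation_constant a * a ^ m \<le> dist (code_point a e) (code_point a e')"
proof -
  have sep: "separation_constant a * (a ^ 2) ^ j
      \<le> \<bar>alt_series a (\<lambda>i. sgn_bit e (2 * i + r)) - alt_series a (\<lambda>i. sgn_bit e' (2 * i + r))\<bar>"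
    if "m = 2 * j + r" for j r
    by (rule abs_alt_series_diff_ge) (use that eq ne a in \<open>auto simp: sgn_bit_def\<close>)
  show ?thesis
  proof (cases "even m")
    case True
    then obtain j where m: "m = 2 * j" by blast
    have "separation_constant a * a ^ m \<le> \<bar>fst (code_point a e) - fst (code_point a e')\<bar>"
      using sep[of j 0] by (simp add: m power_mult code_point_def)
    also have "\<dots> \<le> dist (code_point a e) (code_point a e')"
      using dist_fst_le[of "code_point a e" "code_point a e'"] by (simp add: dist_real_def)
    finally show ?thesis .
  next
    case False
    then obtain j where m: "m = 2 * j + 1" using oddE by blast
    have "separation_constant a * a ^ m = a * (separation_constant a * (a ^ 2) ^ j)"
      by (simp add: m power_add power_mult)
    also have "\<dots> \<le> \<bar>snd (code_point a e) - snd (code_point a e')\<bar>"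
      using sep[of j 1] mult_left_mono[OF sep[of j 1], of a] a
      by (simp add: m code_point_def abs_mult flip: right_diff_distrib)
    also have "\<dots> \<le> dist (code_point a e) (code_point a e')"
      using dist_snd_le[of "code_point a e" "code_point a e'"] by (simp add: dist_real_def)
    finally show ?thesis .
  qed
qed

lemma binary_value_holder:
  assumes a: "0 < a" "a ^ 2 < 1/2" and s0: "0 \<le> s0" "a powr s0 = 1/2"
  shows "\<bar>binary_value e - binary_value e'\<bar>
           \<le> (dist (code_point a e) (code_point a e') / separation_constant a) powr s0"
proof (cases "e = e'")
  case False
  define m where "m = (LEAST k. e k \<noteq> e' k)"
  have "\<exists>k. e k \<noteq> e' k" using False by auto
  then have ne: "e m \<noteq> e' m" unfolding m_def by (rule LeastI_ex)
  have eq: "e k = e' k" if "k < m" for k using not_less_Least[OF that[unfolded m_def]] by blast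
  have "a ^ 2 < 1" using a by simp
  then have "separation_constant a * a ^ m \<le> dist (code_point a e) (code_point a e')"
    by (intro dist_code_point_ge[OF a(1)] eq ne)
  then have "a ^ m \<le> dist (code_point a e) (code_point a e') / separation_constant a"
    using separation_constant_pos[OF a(2)] by (simp add: field_simps)
  have "\<bar>binary_value e - binary_value e'\<bar> \<le> 1 / 2 ^ m" by (rule abs_binary_value_diff_le[OF eq])
  also have "\<dots> = (a ^ m) powr s0" unfolding power_powr_swap[OF a(1)] s0(2) by (simp add: power_divide)
  also have "\<dots> \<le> (dist (code_point a e) (code_point a e') / separation_constant a) powr s0"
    using \<open>a ^ m \<le> _\<close> a s0 by (intro powr_mono2) auto
  finally show ?thesis .
qed simp

lemma hausdorff_measure_S_nonzero:
  assumes "0 < a" "a ^ 2 < 1/2" "0 \<le> s0" "a powr s0 = 1/2"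
  shows "hausdorff_measure s0 (S a) \<noteq> 0"
proof (rule hausdorff_measure_nonzero_if_holder_onto_unit_interval)
  have "a ^ 2 < 1 ^ 2" using assms by simp
  then have "a < 1" by (rule power_less_imp_less_base) simp
  then show "range (code_point a) \<subseteq> S a" using code_point_in_S \<open>0 < a\<close> by blast
  show "{0..1} \<subseteq> range binary_value" by (rule unit_interval_subset_range_binary_value)
  show "0 < 1 / separation_constant a powr s0" using separation_constant_pos[OF assms(2)] by simp
  show "\<bar>binary_value e - binary_value e'\<bar>
      \<le> 1 / separation_constant a powr s0 * dist (code_point a e) (code_point a e') powr s0" for e e'
    using binary_value_holder[OF assms, of e e'] separation_constant_pos[OF assms(2)]
    by (simp add: powr_divide)
qed (fact assms)

lemma hausdorff_dim_S:
  assumes "1/2 < \<alpha>" "\<alpha> < 1 / sqrt 2"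
  shows "hausdorff_dim (S \<alpha>) = - ln 2 / ln \<alpha>"
proof -
  define s0 where "s0 = - ln 2 / ln \<alpha>"
  have "\<alpha> < 1" using assms(2) by (simp add: divide_less_eq order.strict_trans)
  have "\<alpha> ^ 2 < (1 / sqrt 2) ^ 2" using assms by (intro power_strict_mono) auto
  then have "\<alpha> ^ 2 < 1/2" by (simp add: power_divide)
  have "ln \<alpha> < 0" "- ln 2 < ln \<alpha>"
    using assms \<open>\<alpha> < 1\<close> ln_less_cancel_iff[of "1/2" \<alpha>] by (auto simp: ln_div)
  then have "1 < s0" unfolding s0_def by (subst less_divide_eq) auto
  have "\<alpha> powr s0 = 1/2"
    using assms \<open>ln \<alpha> < 0\<close> by (simp add: powr_def s0_def exp_minus)
  show ?thesis
    unfolding s0_def[symmetric]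
  proof (rule hausdorff_dim_eqI)
    show "hausdorff_measure s0 (S \<alpha>) \<noteq> 0"
      using assms \<open>\<alpha> ^ 2 < 1/2\<close> \<open>1 < s0\<close> \<open>\<alpha> powr s0 = 1/2\<close> by (intro hausdorff_measure_S_nonzero) auto
    fix s assume "s0 < s"
    then have "2 * \<alpha> powr s < 2 * \<alpha> powr s0" using assms \<open>\<alpha> < 1\<close> by (simp add: powr_less_mono')
    then show "hausdorff_measure s (S \<alpha>) = 0"
      using assms \<open>\<alpha> < 1\<close> \<open>1 < s0\<close> \<open>s0 < s\<close> \<open>\<alpha> powr s0 = 1/2\<close> by (intro hausdorff_measure_S_eq_0) auto
  qed (use \<open>1 < s0\<close> in simp)
qed

theorem mainTheorem12:
  shows "(\<forall>\<alpha>::real. 1/2 < \<alpha> \<and> \<alpha> < 1 / sqrt 2 \<longrightarrow>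
            hausdorff_dim (S \<alpha>) = - ln 2 / ln \<alpha>)
       \<and> (\<forall>h::real. 1 < h \<and> h < 2 \<longrightarrow> hausdorff_dim (S (2 powr (-1/h))) = h)"
proof (intro conjI allI impI)
  fix \<alpha> :: real assume "1/2 < \<alpha> \<and> \<alpha> < 1 / sqrt 2"
  then show "hausdorff_dim (S \<alpha>) = - ln 2 / ln \<alpha>" by (intro hausdorff_dim_S) auto
next
  fix h :: real assume h: "1 < h \<and> h < 2"
  define \<alpha> where "\<alpha> = (2::real) powr (-1/h)"
  have "(2::real) powr (-1) < 2 powr (-1/h)" using h by (intro powr_less_mono) (auto simp: field_simps)
  then have "1/2 < \<alpha>" by (simp add: \<alpha>_def)
  have "(2::real) powr (-1/h) < 2 powr (-(1/2))" using h by (intro powr_less_mono) (auto simp: field_simps)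
  then have "\<alpha> < 1 / sqrt 2" by (simp add: \<alpha>_def powr_minus_divide powr_half_sqrt)
  with \<open>1/2 < \<alpha>\<close> have "hausdorff_dim (S \<alpha>) = - ln 2 / ln \<alpha>" by (rule hausdorff_dim_S)
  also have "- ln 2 / ln \<alpha> = h" using h by (simp add: \<alpha>_def field_simps)
  finally show "hausdorff_dim (S (2 powr (-1/h))) = h" by (simp add: \<alpha>_def)
qed

end
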